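(* Let $Q\in\mathbb{R}^{n\times n}$ be symmetric positive definite, $\mathcal{E}=\{x: x^TQx\le1\}$, $\partial\mathcal{E}=\{x:x^TQx=1\}$, and $A\in\mathbb{R}^{n\times n}$. Then for every $x_0\in\partial\mathcal{E}$ the solution $x(t)=e^{At}x_0$ of $\dot x=Ax$ satisfies $x(t)\in\partial\mathcal{E}$ for all $t\ge0$ if and only if $$\sum_{i=0}^{k-1}\frac{1}{(k-1)!}\binom{k-1}{i}(A^i)^TQA^{k-i-1}=0\quad\text{for all }k=2,3,\dots$$ *)

theory Defs
  imports "HOL-Analysis.Analysis"
begin

fun matpow :: "real^'n^'n \<Rightarrow> nat \<Rightarrow> real^'n^'n" where
  "matpow A 0 = mat 1"
| "matpow A (Suc k) = A ** matpow A k"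

definition mexp :: "real \<Rightarrow> real^'n^'n \<Rightarrow> real^'n^'n" where
  "mexp t A = (\<Sum>k. (t ^ k / fact k) *\<^sub>R matpow A k)"

definition symmetric_matrix :: "real^'n^'n \<Rightarrow> bool" where
  "symmetric_matrix Q \<longleftrightarrow> transpose Q = Q"

definition positive_definite :: "real^'n^'n \<Rightarrow> bool" where
  "positive_definite Q \<longleftrightarrow> (\<forall>x. x \<noteq> 0 \<longrightarrow> x \<bullet> (Q *v x) > 0)"

definition ellipsoid_boundary :: "real^'n^'n \<Rightarrow> (real^'n) set" where
  "ellipsoid_boundary Q = {x. x \<bullet> (Q *v x) = 1}"

end

theory Submission
  imports Defs
begin

(*
  Along a trajectory x(t) = e^{tA} x0 the quadratic form q(t) = x(t)^T Q x(t) has derivative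
  x(t)^T (A^T Q + Q A) x(t). If the boundary of the ellipsoid is invariant, q is constant on
  [0, oo), so the symmetric form A^T Q + Q A vanishes on the boundary at t = 0, hence everywhere
  by homogeneity, hence is the zero matrix; conversely A^T Q + Q A = 0 makes q constant.
  The k = 2 sum is exactly A^T Q + Q A, and Q A = -A^T Q gives (A^T)^i Q A^j = (-1)^j (A^T)^(i+j) Q,
  so every higher sum is a multiple of the alternating binomial sum (1 - 1)^(k-1) = 0.
*)

lemma matpow_add: "matpow A (m + n) = matpow A m ** matpow A n"
  by (induction m) (auto simp: matrix_mul_assoc)

lemma matpow_Suc_right: "matpow A (Suc n) = matpow A n ** A"
  using matpow_add[of A n 1] by simp

lemma transpose_matpow: "transpose (matpow A n) = matpow (transpose A) n"
  by (induction n) (simp_all add: matrix_transpose_mul flip: matpow_Suc_right)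

lemma scaleR_matrix_mult: "(c *\<^sub>R X) ** Y = c *\<^sub>R (X ** (Y::real^'p^'n))"
  by (simp add: scalar_matrix_assoc)

lemma matrix_mult_scaleR: "X ** (c *\<^sub>R Y) = c *\<^sub>R (X ** (Y::real^'p^'n))"
  by (simp add: matrix_scalar_ac scalar_matrix_assoc)

lemma uminus_matrix_mult: "(- X) ** Y = - (X ** (Y::real^'p^'n))"
  using scaleR_matrix_mult[of "-1" X Y] by simp

lemma mult_matpow_skew:
  fixes Q A :: "real^'n^'n"
  assumes "transpose A ** Q + Q ** A = 0"
  shows "Q ** matpow A n = (-1)^n *\<^sub>R (matpow (transpose A) n ** Q)"
proof (induction n)
  case (Suc n)
  have skew: "Q ** A = - (transpose A ** Q)"
    using assms by (simp add: add_eq_0_iff)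
  have "Q ** matpow A (Suc n) = (Q ** A) ** matpow A n"
    by (simp add: matrix_mul_assoc)
  also have "\<dots> = (-1)^Suc n *\<^sub>R (matpow (transpose A) (Suc n) ** Q)"
    by (simp add: skew Suc uminus_matrix_mult matrix_mult_scaleR flip: matrix_mul_assoc)
  finally show ?case .
qed simp

lemma transpose_matpow_mult_matpow_skew:
  fixes Q A :: "real^'n^'n"
  assumes "transpose A ** Q + Q ** A = 0" and "i \<le> m"
  shows "transpose (matpow A i) ** Q ** matpow A (m - i)
           = (-1)^(m - i) *\<^sub>R (matpow (transpose A) m ** Q)"
proof -
  have "transpose (matpow A i) ** Q ** matpow A (m - i)
          = matpow (transpose A) i ** (Q ** matpow A (m - i))"
    by (simp add: transpose_matpow matrix_mul_assoc)
  also have "\<dots> = (-1)^(m - i) *\<^sub>R (matpow (transpose A) (i + (m - i)) ** Q)"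
    by (simp add: mult_matpow_skew[OF assms(1)] matrix_mult_scaleR matpow_add matrix_mul_assoc)
  finally show ?thesis using assms(2) by simp
qed

lemma binomial_sum_skew_eq_zero:
  fixes Q A :: "real^'n^'n"
  assumes "transpose A ** Q + Q ** A = 0" and "m > 0"
  shows "(\<Sum>i=0..m. real (m choose i) *\<^sub>R (transpose (matpow A i) ** Q ** matpow A (m - i))) = 0"
proof -
  have "(\<Sum>i=0..m. real (m choose i) *\<^sub>R (transpose (matpow A i) ** Q ** matpow A (m - i)))
          = (\<Sum>i\<le>m. real (m choose i) * 1^i * (-1)^(m - i)) *\<^sub>R (matpow (transpose A) m ** Q)"
    by (simp add: atLeast0AtMost scaleR_sum_left transpose_matpow_mult_matpow_skew[OF assms(1)])
  also have "(\<Sum>i\<le>m. real (m choose i) * 1^i * (-1)^(m - i)) = (1 + (-1))^m"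
    by (rule binomial_ring[symmetric])
  finally show ?thesis using assms(2) by simp
qed

lemma Lyapunov_iff_binomial_sums_zero:
  fixes Q A :: "real^'n^'n"
  shows "transpose A ** Q + Q ** A = 0
     \<longleftrightarrow> (\<forall>k\<ge>2. (\<Sum>i=0..k-1. (1 / fact (k-1) * real ((k-1) choose i)) *\<^sub>R
                     (transpose (matpow A i) ** Q ** matpow A (k-i-1))) = 0)"
proof
  assume Lyap: "transpose A ** Q + Q ** A = 0"
  show "\<forall>k\<ge>2. (\<Sum>i=0..k-1. (1 / fact (k-1) * real ((k-1) choose i)) *\<^sub>R
                     (transpose (matpow A i) ** Q ** matpow A (k-i-1))) = 0"
  proof (intro allI impI)
    fix k :: nat assume "k \<ge> 2"
    then obtain m where k: "k = Suc m" and "m > 0" by (cases k) auto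
    have "(\<Sum>i=0..k-1. (1 / fact (k-1) * real ((k-1) choose i)) *\<^sub>R
                     (transpose (matpow A i) ** Q ** matpow A (k-i-1)))
        = (1 / fact m) *\<^sub>R
            (\<Sum>i=0..m. real (m choose i) *\<^sub>R (transpose (matpow A i) ** Q ** matpow A (m - i)))"
      by (simp add: k scaleR_sum_right)
    then show "(\<Sum>i=0..k-1. (1 / fact (k-1) * real ((k-1) choose i)) *\<^sub>R
                     (transpose (matpow A i) ** Q ** matpow A (k-i-1))) = 0"
      using binomial_sum_skew_eq_zero[OF Lyap \<open>m > 0\<close>] by simp
  qed
next
  assume "\<forall>k\<ge>2. (\<Sum>i=0..k-1. (1 / fact (k-1) * real ((k-1) choose i)) *\<^sub>R
                     (transpose (matpow A i) ** Q ** matpow A (k-i-1))) = 0"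
  from this[rule_format, of 2] show "transpose A ** Q + Q ** A = 0"
    by (simp add: numeral_2_eq_2 add.commute)
qed

lemma matpow_mult_vector_bound:
  fixes A :: "real^'n^'n"
  obtains B where "B > 0" "\<And>n v. norm (matpow A n *v v) \<le> B^n * norm v"
proof -
  obtain B where B: "B > 0" "\<And>v. norm (A *v v) \<le> norm v * B"
    using bounded_linear.pos_bounded[of "(*v) A"] by (auto simp: linear_conv_bounded_linear)
  have "norm (matpow A n *v v) \<le> B^n * norm v" for n v
  proof (induction n)
    case (Suc n)
    have "norm (matpow A (Suc n) *v v) \<le> norm (matpow A n *v v) * B"
      using B(2) by (simp add: matrix_vector_mul_assoc[symmetric])
    also have "\<dots> \<le> B^Suc n * norm v"
      using Suc B(1) by (simp add: mult_right_mono mult.commute mult.left_commute)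
    finally show ?case .
  qed simp
  with B(1) show ?thesis using that by blast
qed

lemma summable_exp_series_mult_vector:
  fixes A :: "real^'n^'n"
  shows "summable (\<lambda>n. (t^n / fact n) *\<^sub>R (matpow A n *v v))"
proof -
  obtain B where B: "B > 0" "\<And>n v. norm (matpow A n *v v) \<le> B^n * norm v"
    using matpow_mult_vector_bound by blast
  have "norm ((t^n / fact n) *\<^sub>R (matpow A n *v v)) \<le> norm v * (inverse (fact n) * (\<bar>t\<bar> * B)^n)" for n
  proof -
    have "norm ((t^n / fact n) *\<^sub>R (matpow A n *v v)) = \<bar>t\<bar>^n / fact n * norm (matpow A n *v v)"
      by (simp add: power_abs)
    also have "\<dots> \<le> \<bar>t\<bar>^n / fact n * (B^n * norm v)"
      by (intro mult_left_mono B(2)) auto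
    finally show ?thesis by (simp add: power_mult_distrib field_simps)
  qed
  moreover have "summable (\<lambda>n. norm v * (inverse (fact n) * (\<bar>t\<bar> * B)^n))"
    by (intro summable_mult summable_exp)
  ultimately show ?thesis by (rule summable_comparison_test'[rotated])
qed

lemma summable_vec_componentwise:
  fixes f :: "nat \<Rightarrow> 'a::real_normed_vector ^ 'm"
  assumes "\<And>i. summable (\<lambda>n. f n $ i)"
  shows "summable f"
proof -
  have "f sums (\<chi> i. \<Sum>n. f n $ i)"
    unfolding sums_def by (rule vec_tendstoI) (simp add: summable_LIMSEQ assms)
  then show ?thesis by (rule sums_summable)
qed

lemma matrix_entry_eq_mult_axis: "(M::real^'n^'m) $ i $ j = (M *v axis j 1) $ i"
  by (simp add: matrix_vector_mult_def axis_def if_distrib sum.delta' cong: if_cong)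

lemma summable_exp_series_matpow:
  fixes A :: "real^'n^'n"
  shows "summable (\<lambda>n. (t^n / fact n) *\<^sub>R matpow A n)"
proof (intro summable_vec_componentwise)
  fix i j
  have "summable (\<lambda>n. ((t^n / fact n) *\<^sub>R (matpow A n *v axis j 1)) $ i)"
    by (rule summable_vec_nth[OF summable_exp_series_mult_vector])
  then show "summable (\<lambda>n. ((t^n / fact n) *\<^sub>R matpow A n) $ i $ j)"
    by (simp add: matrix_entry_eq_mult_axis)
qed

lemma mexp_mult_vector:
  fixes A :: "real^'n^'n"
  shows "mexp t A *v v = (\<Sum>n. (t^n / fact n) *\<^sub>R (matpow A n *v v))"
proof -
  have "bounded_linear (\<lambda>M::real^'n^'n. M *v v)"
    by (auto intro!: bounded_linearI' simp: matrix_vector_mult_add_rdistrib scaleR_matrix_vector_assoc)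
  from bounded_linear.suminf[OF this summable_exp_series_matpow]
  show ?thesis by (simp add: mexp_def scaleR_matrix_vector_assoc)
qed

lemma mexp_zero_mult_vector:
  fixes A :: "real^'n^'n"
  shows "mexp 0 A *v v = v"
proof -
  have "(\<lambda>n. ((0::real)^n / fact n) *\<^sub>R (matpow A n *v v)) = (\<lambda>n. if n = 0 then v else 0)"
    by (auto simp: fun_eq_iff)
  moreover have "(\<lambda>n. if n = 0 then v else 0) sums v"
    using sums_single[of 0 "\<lambda>_. v"] by simp
  ultimately show ?thesis by (simp add: mexp_mult_vector sums_iff)
qed

lemma has_vector_derivative_componentwise:
  fixes f :: "real \<Rightarrow> real^'m"
  assumes "\<And>j. ((\<lambda>s. f s $ j) has_real_derivative f' $ j) (at t)"
  shows "(f has_vector_derivative f') (at t)"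
  unfolding has_vector_derivative_def
proof (subst has_derivative_componentwise_within, intro ballI)
  fix b :: "real^'m" assume "b \<in> Basis"
  then obtain j where "b = axis j 1" by (auto simp: Basis_vec_def)
  then show "((\<lambda>s. f s \<bullet> b) has_derivative (\<lambda>h. (h *\<^sub>R f') \<bullet> b)) (at t)"
    using assms[of j] by (simp add: has_field_derivative_def mult_commute_abs flip: cart_eq_inner_axis)
qed

lemma exp_series_has_vector_derivative:
  fixes w :: "nat \<Rightarrow> real^'m"
  assumes summable: "\<And>s. summable (\<lambda>n. (s^n / fact n) *\<^sub>R w n)"
  shows "((\<lambda>s. \<Sum>n. (s^n / fact n) *\<^sub>R w n) has_vector_derivative
           (\<Sum>n. (t^n / fact n) *\<^sub>R w (Suc n))) (at t)"
proof -
  define c where "c j n = w n $ j / fact n" for j n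
  have series_nth: "(\<Sum>n. (s^n / fact n) *\<^sub>R w n) $ j = (\<Sum>n. c j n * s^n)" for s j
    using sums_vec_nth[OF summable_sums[OF summable[of s]], of j]
    by (simp add: c_def sums_iff mult.commute)
  have summable_nth: "summable (\<lambda>n. c j n * s^n)" for j s
    using summable_vec_nth[OF summable[of s], of j] by (simp add: c_def mult.commute)
  have diffs_c: "diffs (c j) n * t^n = ((t^n / fact n) *\<^sub>R w (Suc n)) $ j" for j n
    by (simp add: diffs_def c_def field_simps del: of_nat_Suc)
  have "summable (\<lambda>n. ((t^n / fact n) *\<^sub>R w (Suc n)) $ j)" for j
    using termdiff_converges_all[OF summable_nth, of j t] unfolding diffs_c .
  then have "summable (\<lambda>n. (t^n / fact n) *\<^sub>R w (Suc n))"
    by (rule summable_vec_componentwise)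
  then have derived_nth: "(\<Sum>n. (t^n / fact n) *\<^sub>R w (Suc n)) $ j = (\<Sum>n. diffs (c j) n * t^n)" for j
    unfolding diffs_c by (rule sums_unique[OF sums_vec_nth[OF summable_sums]])
  show ?thesis
    using termdiffs_strong_converges_everywhere[OF summable_nth]
    by (intro has_vector_derivative_componentwise) (simp add: series_nth derived_nth)
qed

lemma mexp_mult_vector_has_vector_derivative:
  fixes A :: "real^'n^'n"
  shows "((\<lambda>s. mexp s A *v v) has_vector_derivative A *v (mexp t A *v v)) (at t)"
proof -
  have "A *v (mexp t A *v v) = (\<Sum>n. A *v ((t^n / fact n) *\<^sub>R (matpow A n *v v)))"
    unfolding mexp_mult_vector
    by (rule bounded_linear.suminf[OF _ summable_exp_series_mult_vector])
       (simp add: linear_conv_bounded_linear)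
  also have "\<dots> = (\<Sum>n. (t^n / fact n) *\<^sub>R (matpow A (Suc n) *v v))"
    by (simp only: matrix_vector_mult_scaleR matrix_vector_mul_assoc matpow.simps)
  finally show ?thesis
    using exp_series_has_vector_derivative[of "\<lambda>n. matpow A n *v v", OF summable_exp_series_mult_vector]
    by (simp only: mexp_mult_vector)
qed

lemma quadratic_form_has_real_derivative:
  fixes f :: "real \<Rightarrow> real^'n" and Q :: "real^'n^'n"
  assumes "(f has_vector_derivative f') (at t)"
  shows "((\<lambda>s. f s \<bullet> (Q *v f s)) has_real_derivative f t \<bullet> (Q *v f') + f' \<bullet> (Q *v f t)) (at t)"
proof -
  have "((\<lambda>s. Q *v f s) has_vector_derivative Q *v f') (at t)"
    by (rule bounded_linear.has_vector_derivative[OF _ assms]) (simp add: linear_conv_bounded_linear)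
  from bounded_bilinear.has_vector_derivative[OF bounded_bilinear_inner assms this] show ?thesis
    by (simp add: has_real_derivative_iff_has_vector_derivative)
qed

lemma inner_transpose_mult_vector: "x \<bullet> (transpose M *v y) = (M *v x) \<bullet> (y::real^'m)"
  for M :: "real^'n^'m"
  by (metis dot_lmul_matrix inner_commute transpose_matrix_vector)

lemma quadratic_form_mexp_has_real_derivative:
  fixes A Q :: "real^'n^'n"
  shows "((\<lambda>s. (mexp s A *v v) \<bullet> (Q *v (mexp s A *v v))) has_real_derivative
           (mexp t A *v v) \<bullet> ((transpose A ** Q + Q ** A) *v (mexp t A *v v))) (at t)"
proof -
  define x where "x = mexp t A *v v"
  have "(A *v x) \<bullet> (Q *v x) = x \<bullet> (transpose A *v (Q *v x))"
    by (rule inner_transpose_mult_vector[symmetric])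
  then have "x \<bullet> (Q *v (A *v x)) + (A *v x) \<bullet> (Q *v x) = x \<bullet> ((transpose A ** Q + Q ** A) *v x)"
    by (simp add: matrix_vector_mult_add_rdistrib inner_add_right add.commute
        flip: matrix_vector_mul_assoc del: transpose_matrix_vector)
  with quadratic_form_has_real_derivative[OF mexp_mult_vector_has_vector_derivative[of A v t], of Q]
  show ?thesis unfolding x_def by simp
qed

lemma DERIV_zero_if_constant_right:
  fixes g :: "real \<Rightarrow> real"
  assumes "(g has_real_derivative D) (at a)" and "\<And>s. s \<ge> a \<Longrightarrow> g s = g a"
  shows "D = 0"
proof (rule has_field_derivative_unique)
  show "(g has_real_derivative D) (at a within {a..})"
    using assms(1) by (rule has_field_derivative_at_within)
  show "(g has_real_derivative 0) (at a within {a..})"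
    by (rule has_field_derivative_transform_within[of "\<lambda>_. g a" _ _ _ 1]) (auto intro: assms(2)[symmetric])
  show "at a within {a..} \<noteq> bot"
  proof -
    have "{a..} - {a} = {a<..}" by auto
    then show ?thesis by (simp add: at_within_eq_bot_iff)
  qed
qed

lemma quadratic_form_zero_if_zero_on_ellipsoid_boundary:
  fixes Q N :: "real^'n^'n"
  assumes "positive_definite Q" and "\<And>y. y \<in> ellipsoid_boundary Q \<Longrightarrow> y \<bullet> (N *v y) = 0"
  shows "x \<bullet> (N *v x) = 0"
proof (cases "x = 0")
  case False
  define r where "r = sqrt (x \<bullet> (Q *v x))"
  have "r > 0"
    using assms(1) False by (simp add: positive_definite_def r_def)
  have "(x /\<^sub>R r) \<bullet> (Q *v (x /\<^sub>R r)) = (x \<bullet> (Q *v x)) / r^2"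
    by (simp add: matrix_vector_mult_scaleR power2_eq_square field_simps)
  also have "\<dots> = 1"
    using \<open>r > 0\<close> by (simp add: r_def)
  finally have "(x /\<^sub>R r) \<bullet> (N *v (x /\<^sub>R r)) = 0"
    by (intro assms(2)) (simp add: ellipsoid_boundary_def)
  then show ?thesis
    using \<open>r > 0\<close> by (simp add: matrix_vector_mult_scaleR)
qed simp

lemma symmetric_matrix_eq_0_if_quadratic_form_zero:
  fixes N :: "real^'n^'n"
  assumes "transpose N = N" and "\<And>x. x \<bullet> (N *v x) = 0"
  shows "N = 0"
proof -
  have polar: "x \<bullet> (N *v y) = 0" for x y
  proof -
    have "y \<bullet> (N *v x) = x \<bullet> (N *v y)"
      using inner_transpose_mult_vector[of y N x] assms(1) by (simp add: inner_commute)
    moreover have "(x + y) \<bullet> (N *v (x + y)) = 0"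
      by (rule assms(2))
    ultimately show ?thesis
      using assms(2)[of x] assms(2)[of y]
      by (simp add: matrix_vector_right_distrib inner_add_left inner_add_right)
  qed
  have "N *v y = 0 *v y" for y
    using polar[of "N *v y" y] by simp
  then show ?thesis
    by (simp add: matrix_eq)
qed

lemma transpose_add: "transpose (M + N) = transpose M + transpose (N::'a::semiring_1^'n^'m)"
  by (simp add: transpose_def vec_eq_iff)

lemma ellipsoid_boundary_invariant_iff_Lyapunov:
  fixes Q A :: "real^'n^'n"
  assumes "symmetric_matrix Q" and "positive_definite Q"
  shows "(\<forall>x0 \<in> ellipsoid_boundary Q. \<forall>t\<ge>0. mexp t A *v x0 \<in> ellipsoid_boundary Q)
     \<longleftrightarrow> transpose A ** Q + Q ** A = 0"
proof
  assume invariant: "\<forall>x0 \<in> ellipsoid_boundary Q. \<forall>t\<ge>0. mexp t A *v x0 \<in> ellipsoid_boundary Q"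
  define N where "N = transpose A ** Q + Q ** A"
  have "x0 \<bullet> (N *v x0) = 0" if x0: "x0 \<in> ellipsoid_boundary Q" for x0
  proof (rule DERIV_zero_if_constant_right)
    show "((\<lambda>s. (mexp s A *v x0) \<bullet> (Q *v (mexp s A *v x0))) has_real_derivative x0 \<bullet> (N *v x0)) (at 0)"
      using quadratic_form_mexp_has_real_derivative[of A x0 Q 0]
      by (simp add: N_def mexp_zero_mult_vector)
    show "(mexp s A *v x0) \<bullet> (Q *v (mexp s A *v x0)) = (mexp 0 A *v x0) \<bullet> (Q *v (mexp 0 A *v x0))"
      if "s \<ge> 0" for s
      using invariant x0 that by (simp add: ellipsoid_boundary_def mexp_zero_mult_vector)
  qed
  then have "x \<bullet> (N *v x) = 0" for x
    by (rule quadratic_form_zero_if_zero_on_ellipsoid_boundary[OF assms(2)])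
  moreover have "transpose N = N"
    using assms(1) by (simp add: N_def symmetric_matrix_def transpose_add matrix_transpose_mul add.commute)
  ultimately show "transpose A ** Q + Q ** A = 0"
    unfolding N_def[symmetric] by (intro symmetric_matrix_eq_0_if_quadratic_form_zero)
next
  assume Lyapunov: "transpose A ** Q + Q ** A = 0"
  show "\<forall>x0 \<in> ellipsoid_boundary Q. \<forall>t\<ge>0. mexp t A *v x0 \<in> ellipsoid_boundary Q"
  proof (intro ballI allI impI)
    fix x0 and t :: real
    assume x0: "x0 \<in> ellipsoid_boundary Q"
    have "((\<lambda>s. (mexp s A *v x0) \<bullet> (Q *v (mexp s A *v x0))) has_real_derivative 0) (at s)" for s
      using quadratic_form_mexp_has_real_derivative[of A x0 Q s] by (simp add: Lyapunov)
    then have "(mexp t A *v x0) \<bullet> (Q *v (mexp t A *v x0)) = (mexp 0 A *v x0) \<bullet> (Q *v (mexp 0 A *v x0))"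
      by (intro DERIV_isconst_all allI)
    with x0 show "mexp t A *v x0 \<in> ellipsoid_boundary Q"
      by (simp add: ellipsoid_boundary_def mexp_zero_mult_vector)
  qed
qed

theorem proposition3p14:
  fixes Q A :: "real^'n^'n"
  assumes "symmetric_matrix Q" and "positive_definite Q"
  shows "(\<forall>x0 \<in> ellipsoid_boundary Q. \<forall>t\<ge>0. mexp t A *v x0 \<in> ellipsoid_boundary Q)
     \<longleftrightarrow> (\<forall>k\<ge>2. (\<Sum>i=0..k-1. (1 / fact (k-1) * real ((k-1) choose i)) *\<^sub>R
                     (transpose (matpow A i) ** Q ** matpow A (k-i-1))) = 0)"
  unfolding ellipsoid_boundary_invariant_iff_Lyapunov[OF assms] by (rule Lyapunov_iff_binomial_sums_zero)

end
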